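(* Let $p$ and $\ell$ be arbitrary positive integers and let $\varepsilon\in(0,1)$. There exist a finite metric space $(\mathcal{X},d)$, an initial forest on it with $\gamma(\mathcal{P})=1$, and a choice of sets $R_i\subseteq P_i$ with $|R_i|=\ell$ for every component, such that the spanning tree returned by $\textsf{MultiRepMFC}(R)$ has weight exactly $$\frac{(2+\ell\varepsilon-\varepsilon)p-1}{(1+\varepsilon\ell)p-\varepsilon}$$ times the weight of an optimal solution of the Metric Forest Completion problem (which for this instance is also a minimum spanning tree of $G_{\mathcal{X}}$).
   Context: For a finite metric space $(\mathcal{X},d)$, $G_{\mathcal{X}}$ is the complete graph on $\mathcal{X}$ with edge weights $d$, and the weight of an edge set is the sum of its edge weights. For $A,B\subseteq\mathcal{X}$, $d(A,B)=\min_{a\in A,b\in B}d(a,b)$. An initial forest consists of a partition $\mathcal{P}=\{P_1,\dots,P_t\}$ of $\mathcal{X}$ and a spanning tree $T_i$ of the complete graph on each $P_i$; $E_t$ is the union of their edge sets. The Metric Forest Completion (MFC) problem: find a minimum-weight spanning tree of $G_{\mathcal{X}}$ containing $E_t$. Overlap parameter: with $\mathcal{T}_{\mathcal{X}}$ the set of minimum spanning trees of $G_{\mathcal{X}}$ and $T(\mathcal{P})$ the edges of $T$ with both endpoints in the same part, $\gamma(\mathcal{P})=w(E_t)/\max_{T\in\mathcal{T}_{\mathcal{X}}}w(T(\mathcal{P}))$. Algorithm $\textsf{MultiRepMFC}(R)$, for nonempty $R_i\subseteq P_i$: for each pair $i\ne j$ set $\hat w(v_i,v_j)=\min\{d(P_i,R_j),d(P_j,R_i)\}$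 and record a point pair attaining it; compute a minimum spanning tree of the complete graph on $v_1,\dots,v_t$ with weights $\hat w$; return $E_t$ together with the recorded point pairs of the edges of this tree. *)

theory Defs
  imports Complex_Main
begin

definition metric_on :: "'a set \<Rightarrow> ('a \<Rightarrow> 'a \<Rightarrow> real) \<Rightarrow> bool" where
  "metric_on X d \<longleftrightarrow>
     (\<forall>x\<in>X. \<forall>y\<in>X. d x y = 0 \<longleftrightarrow> x = y) \<and>
     (\<forall>x\<in>X. \<forall>y\<in>X. d x y = d y x) \<and>
     (\<forall>x\<in>X. \<forall>y\<in>X. \<forall>z\<in>X. d x z \<le> d x y + d y z)"

definition edges_on :: "'a set \<Rightarrow> 'a set set" where
  "edges_on V = {{x, y} | x y. x \<in> V \<and> y \<in> V \<and> x \<noteq> y}"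

definition sym2 :: "('a \<Rightarrow> 'a \<Rightarrow> real) \<Rightarrow> 'a set \<Rightarrow> real" where
  "sym2 g e = (THE r. \<exists>x y. e = {x, y} \<and> r = g x y)"

definition wt :: "('a set \<Rightarrow> real) \<Rightarrow> 'a set set \<Rightarrow> real" where
  "wt f E = (\<Sum>e\<in>E. f e)"

definition adj :: "'a set set \<Rightarrow> ('a \<times> 'a) set" where
  "adj T = {(x, y). {x, y} \<in> T}"

definition spanning_tree :: "'a set \<Rightarrow> 'a set set \<Rightarrow> bool" where
  "spanning_tree V T \<longleftrightarrow> finite V \<and> V \<noteq> {} \<and> T \<subseteq> edges_on V \<and>
     (\<forall>x\<in>V. \<forall>y\<in>V. (x, y) \<in> (adj T)\<^sup>*) \<and> card T = card V - 1"

definition is_mst :: "'a set \<Rightarrow> ('a set \<Rightarrow> real) \<Rightarrow> 'a set set \<Rightarrow> bool" where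
  "is_mst V f T \<longleftrightarrow> spanning_tree V T \<and>
     (\<forall>T'. spanning_tree V T' \<longrightarrow> wt f T \<le> wt f T')"

definition setdist :: "('a \<Rightarrow> 'a \<Rightarrow> real) \<Rightarrow> 'a set \<Rightarrow> 'a set \<Rightarrow> real" where
  "setdist d A B = Min {d a b | a b. a \<in> A \<and> b \<in> B}"

definition is_partition :: "'a set \<Rightarrow> 'a set set \<Rightarrow> bool" where
  "is_partition X Pt \<longleftrightarrow> (\<forall>P\<in>Pt. P \<noteq> {}) \<and> \<Union>Pt = X \<and>
     (\<forall>P\<in>Pt. \<forall>Q\<in>Pt. P \<noteq> Q \<longrightarrow> P \<inter> Q = {})"

definition initial_forest :: "'a set \<Rightarrow> 'a set set \<Rightarrow> ('a set \<Rightarrow> 'a set set) \<Rightarrow> bool" where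
  "initial_forest X Pt T \<longleftrightarrow> is_partition X Pt \<and> (\<forall>P\<in>Pt. spanning_tree P (T P))"

definition forest_edges :: "'a set set \<Rightarrow> ('a set \<Rightarrow> 'a set set) \<Rightarrow> 'a set set" where
  "forest_edges Pt T = (\<Union>P\<in>Pt. T P)"

definition intra :: "'a set set \<Rightarrow> 'a set set \<Rightarrow> 'a set set" where
  "intra Pt T = {e\<in>T. \<exists>P\<in>Pt. e \<subseteq> P}"

definition gamma :: "'a set \<Rightarrow> ('a \<Rightarrow> 'a \<Rightarrow> real) \<Rightarrow> 'a set set \<Rightarrow> ('a set \<Rightarrow> 'a set set) \<Rightarrow> real" where
  "gamma X d Pt T = wt (sym2 d) (forest_edges Pt T) /
     Max {wt (sym2 d) (intra Pt S) | S. is_mst X (sym2 d) S}"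

definition mfc_opt :: "'a set \<Rightarrow> ('a \<Rightarrow> 'a \<Rightarrow> real) \<Rightarrow> 'a set set \<Rightarrow> ('a set \<Rightarrow> 'a set set) \<Rightarrow> 'a set set \<Rightarrow> bool" where
  "mfc_opt X d Pt T S \<longleftrightarrow> spanning_tree X S \<and> forest_edges Pt T \<subseteq> S \<and>
     (\<forall>S'. spanning_tree X S' \<and> forest_edges Pt T \<subseteq> S' \<longrightarrow> wt (sym2 d) S \<le> wt (sym2 d) S')"

text \<open>The contracted weight w-hat on the pair of parts {P,Q} (parts play the role of v_i).\<close>
definition what :: "('a \<Rightarrow> 'a \<Rightarrow> real) \<Rightarrow> ('a set \<Rightarrow> 'a set) \<Rightarrow> 'a set \<Rightarrow> 'a set \<Rightarrow> real" where
  "what d R P Q = min (setdist d P (R Q)) (setdist d Q (R P))"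

text \<open>F is a possible output of MultiRepMFC(R) (for some tie-breaking of the recorded
  point pairs and of the minimum spanning tree on the contracted graph).\<close>
definition multirep_output ::
  "'a set \<Rightarrow> ('a \<Rightarrow> 'a \<Rightarrow> real) \<Rightarrow> 'a set set \<Rightarrow> ('a set \<Rightarrow> 'a set set) \<Rightarrow> ('a set \<Rightarrow> 'a set)
     \<Rightarrow> 'a set set \<Rightarrow> bool" where
  "multirep_output X d Pt T R F \<longleftrightarrow>
     (\<exists>rec :: 'a set set \<Rightarrow> 'a \<times> 'a. \<exists>M.
        (\<forall>P\<in>Pt. \<forall>Q\<in>Pt. P \<noteq> Q \<longrightarrow>
           ((fst (rec {P, Q}) \<in> P \<and> snd (rec {P, Q}) \<in> R Q) \<or>
            (fst (rec {P, Q}) \<in> Q \<and> snd (rec {P, Q}) \<in> R P)) \<and>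
           d (fst (rec {P, Q})) (snd (rec {P, Q})) = what d R P Q) \<and>
        is_mst Pt (sym2 (what d R)) M \<and>
        F = forest_edges Pt T \<union> {{fst (rec e), snd (rec e)} | e. e \<in> M})"

end

theory Submission
  imports Defs
begin

text \<open>
  The points form p parts of l + 1 points each, and one point of every part is a hub. Distinct
  points are at distance \<epsilon> if they have the same colour and at distance 1 otherwise, where all
  hubs have colour 0 and the other points of part i have colour i + 1. The initial tree of a part is
  a star centred at a non-hub, of weight 1 + (l - 1)\<epsilon>. With the l non-hubs as representatives
  every contracted weight is 1, so MultiRepMFC adds p - 1 edges of weight 1, whereas a star on the
  hubs completes the forest at cost (p - 1)\<epsilon>. That completion is a minimum spanning tree: a
  spanning tree has at least p edges between the p + 1 colour classes, each of weight 1, and its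
  other edges weigh at least \<epsilon>. Counting edges between parts instead of colour classes in the same
  way shows that no minimum spanning tree has more weight inside the parts than the initial forest,
  whence \<gamma> = 1.
\<close>

section \<open>Spanning trees and partitions\<close>

lemma sym2_doubleton:
  assumes "g y x = g x y"
  shows "sym2 g {x, y} = g x y"
  unfolding sym2_def
proof (rule the_equality)
  fix r assume "\<exists>a b. {x, y} = {a, b} \<and> r = g a b"
  then show "r = g x y" using assms by (auto simp: doubleton_eq_iff)
qed blast

lemma edges_on_subset_Pow: "edges_on V \<subseteq> Pow V"
  unfolding edges_on_def by auto

lemma finite_edges_on: "finite V \<Longrightarrow> finite (edges_on V)"
  using edges_on_subset_Pow by (rule finite_subset) simp

lemma edges_on_mono: "A \<subseteq> B \<Longrightarrow> edges_on A \<subseteq> edges_on B"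
  unfolding edges_on_def by blast

lemma edges_on_subset: "e \<in> edges_on V \<Longrightarrow> e \<subseteq> V"
  unfolding edges_on_def by auto

lemma edges_on_nonempty: "e \<in> edges_on V \<Longrightarrow> e \<noteq> {}"
  unfolding edges_on_def by auto

lemma adj_mono: "A \<subseteq> B \<Longrightarrow> adj A \<subseteq> adj B"
  unfolding adj_def by blast

lemma sym_adj: "sym (adj T)"
  unfolding adj_def sym_def by (auto simp: insert_commute)

lemma spanning_tree_finite: "spanning_tree V T \<Longrightarrow> finite T"
  unfolding spanning_tree_def using finite_edges_on finite_subset by blast

lemma is_mst_wt_eq: "is_mst V f S \<Longrightarrow> is_mst V f S' \<Longrightarrow> wt f S = wt f S'"
  unfolding is_mst_def by (simp add: order_antisym)

definition star :: "'a \<Rightarrow> 'a set \<Rightarrow> 'a set set" where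
  "star c V = (\<lambda>x. {c, x}) ` (V - {c})"

lemma inj_on_doubleton: "inj_on (\<lambda>x. {c, x}) (V - {c})"
  by (auto simp: inj_on_def doubleton_eq_iff)

lemma spanning_tree_star:
  assumes "finite V" "c \<in> V"
  shows "spanning_tree V (star c V)"
proof -
  have "(x, c) \<in> (adj (star c V))\<^sup>*" if "x \<in> V" for x
  proof (cases "x = c")
    case False
    then have "{x, c} \<in> star c V" using that unfolding star_def by (auto simp: insert_commute)
    then show ?thesis unfolding adj_def by auto
  qed simp
  then have "(x, y) \<in> (adj (star c V))\<^sup>*" if "x \<in> V" "y \<in> V" for x y
    using that sym_rtrancl[OF sym_adj] by (meson rtrancl_trans symD)
  moreover have "card (star c V) = card V - 1"
    unfolding star_def using assms by (simp add: card_image[OF inj_on_doubleton])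
  moreover have "star c V \<subseteq> edges_on V"
    using assms unfolding star_def edges_on_def by auto
  ultimately show ?thesis unfolding spanning_tree_def using assms by auto
qed

lemma wt_star:
  assumes "\<And>x. g x c = g c x"
  shows "wt (sym2 g) (star c V) = (\<Sum>x\<in>V - {c}. g c x)"
  unfolding wt_def star_def
  by (simp add: sum.reindex[OF inj_on_doubleton] sym2_doubleton assms)

lemma ex_mst:
  assumes "finite V" "V \<noteq> {}"
  shows "\<exists>T. is_mst V f T"
proof -
  let ?trees = "{T. spanning_tree V T}"
  have "finite ?trees"
    using finite_edges_on[OF assms(1)] unfolding spanning_tree_def
    by (auto intro: finite_subset[of _ "Pow (edges_on V)"])
  moreover obtain c where "c \<in> V" using assms(2) by blast
  then have "?trees \<noteq> {}" using spanning_tree_star[OF assms(1)] by blast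
  ultimately obtain T where "is_arg_min (wt f) (\<lambda>T. T \<in> ?trees) T"
    using ex_is_arg_min_if_finite by blast
  then have "is_mst V f T" unfolding is_arg_min_def is_mst_def by (auto simp: not_less)
  then show ?thesis ..
qed

lemma finite_partition: "is_partition V Q \<Longrightarrow> finite V \<Longrightarrow> finite Q"
  unfolding is_partition_def by (metis Sup_upper finite_UnionD)

lemma partition_Union: "is_partition V Q \<Longrightarrow> \<Union>Q = V"
  unfolding is_partition_def by simp

lemma partition_disjoint: "is_partition V Q \<Longrightarrow> A \<in> Q \<Longrightarrow> B \<in> Q \<Longrightarrow> A \<noteq> B \<Longrightarrow> A \<inter> B = {}"
  unfolding is_partition_def by simp

lemma partition_block_unique:
  "is_partition V Q \<Longrightarrow> A \<in> Q \<Longrightarrow> B \<in> Q \<Longrightarrow> x \<in> A \<Longrightarrow> x \<in> B \<Longrightarrow> A = B"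
  unfolding is_partition_def by blast

lemma partition_block_exists: "is_partition V Q \<Longrightarrow> x \<in> V \<Longrightarrow> \<exists>B\<in>Q. x \<in> B"
  unfolding is_partition_def by (simp add: Union_iff[symmetric])

lemma partition_block_nonempty: "is_partition V Q \<Longrightarrow> B \<in> Q \<Longrightarrow> \<exists>x. x \<in> B"
  unfolding is_partition_def by auto

lemma card_partition:
  assumes "is_partition V Q" "finite V"
  shows "card V = (\<Sum>B\<in>Q. card B)"
proof -
  have "pairwise disjnt Q"
    using partition_disjoint[OF assms(1)] by (auto simp: pairwise_def disjnt_def)
  moreover have "finite B" if "B \<in> Q" for B
    using that assms partition_Union finite_subset[of B V] by blast
  ultimately show ?thesis using card_Union_disjoint partition_Union[OF assms(1)] by metis
qed

lemma trans_partition_blocks: "is_partition V Q \<Longrightarrow> trans (\<Union>B\<in>Q. B \<times> B)"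
  unfolding trans_def by (blast dest: partition_block_unique)

lemma is_partition_merge:
  assumes "is_partition V Q" "A \<in> Q" "B \<in> Q"
  shows "is_partition V (insert (A \<union> B) (Q - {A, B}))"
proof -
  have ne: "\<forall>P\<in>Q. P \<noteq> {}" and un: "\<Union>Q = V"
    and dj: "\<forall>P\<in>Q. \<forall>R\<in>Q. P \<noteq> R \<longrightarrow> P \<inter> R = {}"
    using assms(1) unfolding is_partition_def by auto
  have "(A \<union> B) \<inter> R = {}" if "R \<in> Q - {A, B}" for R
    using dj assms(2,3) that by auto
  then show ?thesis
    unfolding is_partition_def using ne un dj assms(2,3) by (auto simp: Int_commute)
qed

lemma card_partition_le_merge:
  assumes "is_partition V Q" "finite Q" "A \<in> Q" "B \<in> Q"
  shows "card Q \<le> card (insert (A \<union> B) (Q - {A, B})) + 1"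
proof (cases "A = B")
  case True
  then have "insert (A \<union> B) (Q - {A, B}) = Q" using assms(3) by auto
  then show ?thesis by simp
next
  case False
  have "A \<union> B \<notin> Q"
    using assms False unfolding is_partition_def by (metis Int_absorb1 Un_upper1 Un_upper2)
  then have "card (insert (A \<union> B) (Q - {A, B})) = card (Q - {A, B}) + 1"
    using assms(2) by simp
  moreover have "card (Q - {A, B}) = card Q - 2"
    using assms False by (simp add: card_Diff_subset)
  ultimately show ?thesis by simp
qed

lemma card_partition_le_1_if_connected:
  assumes "is_partition V Q" "finite V"
    and "\<forall>x\<in>V. \<forall>y\<in>V. (x, y) \<in> (\<Union>B\<in>Q. B \<times> B)\<^sup>*"
  shows "card Q \<le> 1"
proof -
  have "(\<Union>B\<in>Q. B \<times> B)\<^sup>* = (\<Union>B\<in>Q. B \<times> B)\<^sup>="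
    using trans_partition_blocks[OF assms(1)] by (metis rtrancl_trancl_reflcl trancl_id)
  then have reach: "(x, y) \<in> (\<Union>B\<in>Q. B \<times> B)\<^sup>=" if "x \<in> V" "y \<in> V" for x y
    using assms(3) that by simp
  have "A = B" if AB: "A \<in> Q" "B \<in> Q" for A B
  proof -
    obtain a b where ab: "a \<in> A" "b \<in> B"
      using partition_block_nonempty[OF assms(1)] AB by blast
    then have "a \<in> V" "b \<in> V"
      using partition_Union[OF assms(1)] AB by auto
    then have "(a, b) \<in> (\<Union>B\<in>Q. B \<times> B)\<^sup>=" by (rule reach)
    then obtain D where D: "D \<in> Q" "a \<in> D" "b \<in> D" using AB ab by blast
    have "A = D" by (rule partition_block_unique[OF assms(1) AB(1) D(1) ab(1) D(2)])
    moreover have "B = D" by (rule partition_block_unique[OF assms(1) AB(2) D(1) ab(2) D(3)])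
    ultimately show ?thesis by simp
  qed
  then show ?thesis using finite_partition[OF assms(1,2)] by (simp add: card_le_Suc0_iff_eq)
qed

lemma card_partition_le_connecting_edges:
  assumes "finite C" "finite V" "C \<subseteq> edges_on V" "is_partition V Q"
    and "\<forall>x\<in>V. \<forall>y\<in>V. (x, y) \<in> ((\<Union>B\<in>Q. B \<times> B) \<union> adj C)\<^sup>*"
  shows "card Q \<le> card C + 1"
  using assms
\<comment> \<open>An edge of C either lies inside a block or merges two blocks into one.\<close>
proof (induction C arbitrary: Q rule: finite_induct)
  case empty
  have "card Q \<le> 1"
    using empty(4) by (intro card_partition_le_1_if_connected[OF empty(3,1)]) (simp add: adj_def)
  then show ?case by simp
next
  case (insert e C)
  obtain a b where e: "e = {a, b}" "a \<in> V" "b \<in> V"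
    using insert(5) unfolding edges_on_def by auto
  obtain A B where AB: "A \<in> Q" "a \<in> A" "B \<in> Q" "b \<in> B"
    using partition_block_exists[OF insert(6)] e by metis
  define Q' where "Q' = insert (A \<union> B) (Q - {A, B})"
  have "D \<times> D \<subseteq> (\<Union>B\<in>Q'. B \<times> B)" if "D \<in> Q" for D
    using that unfolding Q'_def by (cases "D \<in> {A, B}") auto
  then have blocks: "(\<Union>D\<in>Q. D \<times> D) \<subseteq> (\<Union>B\<in>Q'. B \<times> B)" by (rule UN_least)
  have e_merged: "{(a, b), (b, a)} \<subseteq> (\<Union>B\<in>Q'. B \<times> B)"
    using AB unfolding Q'_def by auto
  have "adj (insert e C) = {(a, b), (b, a)} \<union> adj C"
    unfolding e adj_def by (auto simp: doubleton_eq_iff)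
  then have "(\<Union>B\<in>Q. B \<times> B) \<union> adj (insert e C) \<subseteq> (\<Union>B\<in>Q'. B \<times> B) \<union> adj C"
    using Un_mono[OF Un_least[OF blocks e_merged] order.refl] by (simp add: Un_assoc)
  then have "\<forall>x\<in>V. \<forall>y\<in>V. (x, y) \<in> ((\<Union>B\<in>Q'. B \<times> B) \<union> adj C)\<^sup>*"
    using insert(7) rtrancl_mono by (metis subsetD)
  then have "card Q' \<le> card C + 1"
    using insert.IH[OF insert(4) _ is_partition_merge[OF insert(6) AB(1,3), folded Q'_def]]
      insert(5) by simp
  moreover have "card Q \<le> card Q' + 1"
    unfolding Q'_def
    by (rule card_partition_le_merge[OF insert(6) finite_partition[OF insert(6,4)] AB(1,3)])
  ultimately show ?case using insert(1,2) by simp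
qed

lemma card_partition_le_crossing_edges:
  assumes "spanning_tree V T" "is_partition V Q"
  shows "card Q \<le> card (T - intra Q T) + 1"
proof (rule card_partition_le_connecting_edges)
  show "finite (T - intra Q T)" using spanning_tree_finite[OF assms(1)] by simp
  show "finite V" "T - intra Q T \<subseteq> edges_on V"
    using assms(1) unfolding spanning_tree_def by auto
  have "adj T \<subseteq> (\<Union>B\<in>Q. B \<times> B) \<union> adj (T - intra Q T)"
    unfolding adj_def intra_def by auto
  then show "\<forall>x\<in>V. \<forall>y\<in>V. (x, y) \<in> ((\<Union>B\<in>Q. B \<times> B) \<union> adj (T - intra Q T))\<^sup>*"
    using assms(1) rtrancl_mono unfolding spanning_tree_def by blast
qed (fact assms(2))

lemma wt_crossing_edges_ge:
  assumes tree: "spanning_tree V S" and "is_partition V Q"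
    and "\<And>e. e \<in> S \<Longrightarrow> b \<le> f e" "0 \<le> b"
  shows "b * (real (card Q) - 1) \<le> wt f (S - intra Q S)"
proof -
  have "b * (real (card Q) - 1) \<le> b * real (card (S - intra Q S))"
    using card_partition_le_crossing_edges[OF assms(1,2)] assms(4)
    by (intro mult_left_mono) auto
  also have "\<dots> = (\<Sum>e\<in>S - intra Q S. b)" by simp
  also have "\<dots> \<le> wt f (S - intra Q S)" unfolding wt_def using assms(3) by (intro sum_mono) auto
  finally show ?thesis .
qed

section \<open>Initial forests\<close>

lemma forest_tree_subset:
  "initial_forest X Pt T \<Longrightarrow> P \<in> Pt \<Longrightarrow> T P \<subseteq> edges_on P"
  unfolding initial_forest_def spanning_tree_def by blast

lemma finite_forest_parts:
  assumes "initial_forest X Pt T" "finite X"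
  shows "finite Pt" and "P \<in> Pt \<Longrightarrow> finite (T P)"
  using assms finite_partition spanning_tree_finite unfolding initial_forest_def by blast+

lemma forest_edges_subset_edges_on:
  assumes "initial_forest X Pt T"
  shows "forest_edges Pt T \<subseteq> edges_on X"
proof -
  have "T P \<subseteq> edges_on X" if "P \<in> Pt" for P
    using forest_tree_subset[OF assms that] edges_on_mono[of P X] that
      partition_Union[of X Pt] assms unfolding initial_forest_def by blast
  then show ?thesis unfolding forest_edges_def by blast
qed

lemma intra_forest_edges:
  assumes "initial_forest X Pt T"
  shows "intra Pt (forest_edges Pt T) = forest_edges Pt T"
proof -
  have "e \<subseteq> P" if "P \<in> Pt" "e \<in> T P" for P e
    using forest_tree_subset[OF assms that(1)] that(2) edges_on_subset by blast
  then show ?thesis unfolding intra_def forest_edges_def by blast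
qed

lemma forest_trees_disjoint:
  assumes "initial_forest X Pt T" "P \<in> Pt" "Q \<in> Pt" "P \<noteq> Q"
  shows "T P \<inter> T Q = {}"
proof -
  have disj: "P \<inter> Q = {}" using assms partition_disjoint unfolding initial_forest_def by blast
  have "e \<notin> T Q" if "e \<in> T P" for e
  proof
    assume "e \<in> T Q"
    then have "e \<subseteq> P \<inter> Q" "e \<noteq> {}"
      using that forest_tree_subset[OF assms(1)] assms(2,3) edges_on_subset edges_on_nonempty
      by blast+
    then show False using disj by simp
  qed
  then show ?thesis by blast
qed

lemma wt_forest_edges:
  assumes "initial_forest X Pt T" "finite X"
  shows "wt f (forest_edges Pt T) = (\<Sum>P\<in>Pt. wt f (T P))"
  unfolding wt_def forest_edges_def
  using finite_forest_parts[OF assms] forest_trees_disjoint[OF assms(1)]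
  by (intro sum.UNION_disjoint) auto

lemma card_forest_edges:
  assumes "initial_forest X Pt T" "finite X"
  shows "card (forest_edges Pt T) + card Pt = card X"
proof -
  have part: "is_partition X Pt" and trees: "\<And>P. P \<in> Pt \<Longrightarrow> spanning_tree P (T P)"
    using assms(1) unfolding initial_forest_def by auto
  have "card (forest_edges Pt T) = (\<Sum>P\<in>Pt. card (T P))"
    unfolding forest_edges_def
    using finite_forest_parts[OF assms] forest_trees_disjoint[OF assms(1)]
    by (intro card_UN_disjoint) auto
  also have "\<dots> = (\<Sum>P\<in>Pt. card P - 1)"
    using trees unfolding spanning_tree_def by simp
  finally have "card (forest_edges Pt T) + card Pt = (\<Sum>P\<in>Pt. (card P - 1) + 1)"
    unfolding sum.distrib by simp
  also have "\<dots> = (\<Sum>P\<in>Pt. card P)"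
    using trees unfolding spanning_tree_def by (intro sum.cong) (auto simp: card_gt_0_iff)
  also have "\<dots> = card X"
    using card_partition[OF part assms(2)] by simp
  finally show ?thesis .
qed

definition transversal :: "'a set set \<Rightarrow> 'a set \<Rightarrow> bool" where
  "transversal Pt U \<longleftrightarrow> U \<subseteq> \<Union>Pt \<and> (\<forall>P\<in>Pt. card (P \<inter> U) = 1)"

lemma card_transversal:
  assumes "transversal Pt U" "is_partition X Pt" "finite X"
  shows "card U = card Pt"
proof -
  have U: "U = (\<Union>P\<in>Pt. P \<inter> U)" using assms(1) unfolding transversal_def by blast
  have "finite Pt" using finite_partition[OF assms(2,3)] .
  moreover have "finite (P \<inter> U)" if "P \<in> Pt" for P
    using assms(1) that unfolding transversal_def by (simp add: card_ge_0_finite)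
  moreover have "(P \<inter> U) \<inter> (Q \<inter> U) = {}" if "P \<in> Pt" "Q \<in> Pt" "P \<noteq> Q" for P Q
    using partition_disjoint[OF assms(2) that] by blast
  ultimately have "card U = (\<Sum>P\<in>Pt. card (P \<inter> U))"
    by (subst U) (intro card_UN_disjoint, auto)
  then show ?thesis using assms(1) unfolding transversal_def by simp
qed

lemma intra_transversal_tree:
  assumes "transversal Pt U" "spanning_tree U S"
  shows "intra Pt S = {}"
proof -
  have "\<not> e \<subseteq> P" if eS: "e \<in> S" and P: "P \<in> Pt" for e P
  proof
    assume "e \<subseteq> P"
    obtain x y where "e = {x, y}" "x \<in> U" "y \<in> U" "x \<noteq> y"
      using eS assms(2) unfolding spanning_tree_def edges_on_def by blast
    then have "{x, y} \<subseteq> P \<inter> U" using \<open>e \<subseteq> P\<close> by blast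
    moreover have "card (P \<inter> U) = 1" using assms(1) P unfolding transversal_def by blast
    ultimately show False
      using card_mono[of "P \<inter> U" "{x, y}"] \<open>x \<noteq> y\<close> by (simp add: card_ge_0_finite)
  qed
  then show ?thesis unfolding intra_def by blast
qed

lemma forest_edges_disjoint_transversal_tree:
  assumes "initial_forest X Pt T" "transversal Pt U" "spanning_tree U S"
  shows "forest_edges Pt T \<inter> S = {}"
  using intra_forest_edges[OF assms(1)] intra_transversal_tree[OF assms(2,3)]
  unfolding intra_def by blast

lemma card_forest_union_transversal_tree:
  assumes forest: "initial_forest X Pt T" and "finite X"
    and "transversal Pt U" and tree: "spanning_tree U S"
  shows "card (forest_edges Pt T \<union> S) = card X - 1"
proof -
  have part: "is_partition X Pt" using forest unfolding initial_forest_def by simp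
  have "card (forest_edges Pt T \<union> S) = card (forest_edges Pt T) + card S"
    using forest_edges_disjoint_transversal_tree[OF forest assms(3) tree]
      finite_subset[OF forest_edges_subset_edges_on[OF forest] finite_edges_on[OF assms(2)]]
      spanning_tree_finite[OF tree] by (simp add: card_Un_disjoint)
  moreover have "card U > 0" "card S = card U - 1"
    using tree unfolding spanning_tree_def by (auto simp: card_gt_0_iff)
  ultimately show ?thesis
    using card_forest_edges[OF forest assms(2)] card_transversal[OF assms(3) part assms(2)]
    by arith
qed

lemma spanning_tree_forest_union:
  assumes forest: "initial_forest X Pt T" and "finite X"
    and "transversal Pt U" and tree: "spanning_tree U S"
  shows "spanning_tree X (forest_edges Pt T \<union> S)"
proof -
  let ?E = "forest_edges Pt T"
  have part: "is_partition X Pt" using forest unfolding initial_forest_def by simp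
  have U_X: "U \<subseteq> X" using assms(3) partition_Union[OF part] unfolding transversal_def by simp
  have reach_U: "\<exists>u\<in>U. (x, u) \<in> (adj (?E \<union> S))\<^sup>*" if x: "x \<in> X" for x
  proof -
    obtain P where P: "P \<in> Pt" "x \<in> P" using partition_block_exists[OF part x] by blast
    then obtain u where u: "u \<in> P" "u \<in> U"
      using assms(3) unfolding transversal_def by (metis card_1_singletonE insertI1 IntE)
    have "(x, u) \<in> (adj (T P))\<^sup>*"
      using forest P u unfolding initial_forest_def spanning_tree_def by blast
    moreover have "adj (T P) \<subseteq> adj (?E \<union> S)"
      using P(1) unfolding forest_edges_def by (intro adj_mono) blast
    ultimately show ?thesis using u(2) rtrancl_mono by blast
  qed
  have "(u, v) \<in> (adj (?E \<union> S))\<^sup>*" if "u \<in> U" "v \<in> U" for u v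
    using tree that rtrancl_mono[OF adj_mono[of S "?E \<union> S"]]
    unfolding spanning_tree_def by blast
  then have conn: "(x, y) \<in> (adj (?E \<union> S))\<^sup>*" if "x \<in> X" "y \<in> X" for x y
    using reach_U[OF that(1)] reach_U[OF that(2)] sym_rtrancl[OF sym_adj]
    by (meson rtrancl_trans symD)
  have "card (?E \<union> S) = card X - 1"
    by (rule card_forest_union_transversal_tree[OF forest assms(2-4)])
  moreover have "?E \<union> S \<subseteq> edges_on X"
    using forest_edges_subset_edges_on[OF forest] edges_on_mono[OF U_X] tree
    unfolding spanning_tree_def by blast
  moreover have "X \<noteq> {}" using tree U_X unfolding spanning_tree_def by blast
  ultimately show ?thesis unfolding spanning_tree_def using assms(2) conn by blast
qed

lemma wt_forest_union_transversal_tree: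
  assumes "initial_forest X Pt T" "finite X" "transversal Pt U" "spanning_tree U S"
  shows "wt f (forest_edges Pt T \<union> S) = wt f (forest_edges Pt T) + wt f S"
  unfolding wt_def
  using forest_edges_disjoint_transversal_tree[OF assms(1,3,4)]
    finite_subset[OF forest_edges_subset_edges_on[OF assms(1)] finite_edges_on[OF assms(2)]]
    spanning_tree_finite[OF assms(4)] by (simp add: sum.union_disjoint)

section \<open>Metric Forest Completion and MultiRepMFC\<close>

lemma mfc_opt_if_mst:
  assumes "is_mst X (sym2 d) S" "forest_edges Pt T \<subseteq> S"
  shows "mfc_opt X d Pt T S"
  using assms unfolding mfc_opt_def is_mst_def by blast

lemma mst_if_mfc_opt:
  assumes "is_mst X (sym2 d) S\<^sub>0" "forest_edges Pt T \<subseteq> S\<^sub>0" "mfc_opt X d Pt T S"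
  shows "is_mst X (sym2 d) S"
  using assms unfolding mfc_opt_def is_mst_def by (meson order.trans)

lemma setdist_attained:
  assumes "finite A" "finite B" "A \<noteq> {}" "B \<noteq> {}"
  shows "\<exists>a\<in>A. \<exists>b\<in>B. d a b = setdist d A B"
proof -
  have "{d a b | a b. a \<in> A \<and> b \<in> B} = (\<lambda>(a, b). d a b) ` (A \<times> B)" by auto
  then have "finite {d a b | a b. a \<in> A \<and> b \<in> B}" "{d a b | a b. a \<in> A \<and> b \<in> B} \<noteq> {}"
    using assms by auto
  from Min_in[OF this] obtain a b where "a \<in> A" "b \<in> B" "d a b = setdist d A B"
    unfolding setdist_def by (smt (verit) mem_Collect_eq)
  then show ?thesis by blast
qed

lemma what_commute: "what d R P Q = what d R Q P"
  unfolding what_def by (simp add: min.commute)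

lemma what_attained:
  assumes "finite P" "finite Q" "R P \<subseteq> P" "R Q \<subseteq> Q" "R P \<noteq> {}" "R Q \<noteq> {}"
  shows "\<exists>x y. ((x \<in> P \<and> y \<in> R Q) \<or> (x \<in> Q \<and> y \<in> R P)) \<and> d x y = what d R P Q"
proof -
  have ne: "P \<noteq> {}" "Q \<noteq> {}" and fin: "finite (R P)" "finite (R Q)"
    using assms finite_subset by auto
  show ?thesis
  proof (cases "setdist d P (R Q) \<le> setdist d Q (R P)")
    case True
    obtain x y where "x \<in> P" "y \<in> R Q" "d x y = setdist d P (R Q)"
      using setdist_attained[OF assms(1) fin(2) ne(1) assms(6)] by blast
    then show ?thesis using True unfolding what_def by auto
  next
    case False
    obtain x y where "x \<in> Q" "y \<in> R P" "d x y = setdist d Q (R P)"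
      using setdist_attained[OF assms(2) fin(1) ne(2) assms(5)] by blast
    then show ?thesis using False unfolding what_def by auto
  qed
qed

lemma ex_multirep_output:
  assumes forest: "initial_forest X Pt T" and "finite X" "X \<noteq> {}"
    and R: "\<And>P. P \<in> Pt \<Longrightarrow> R P \<subseteq> P \<and> R P \<noteq> {}"
  shows "\<exists>F. multirep_output X d Pt T R F"
proof -
  define ok where "ok P Q z \<longleftrightarrow>
    ((fst z \<in> P \<and> snd z \<in> R Q) \<or> (fst z \<in> Q \<and> snd z \<in> R P)) \<and> d (fst z) (snd z) = what d R P Q"
    for P Q z
  have ok_commute: "ok P Q z = ok Q P z" for P Q z
    unfolding ok_def by (auto simp: what_commute)
  have part: "is_partition X Pt" using forest unfolding initial_forest_def by simp
  have ex_ok: "\<exists>z. ok P Q z" if PQ: "P \<in> Pt" "Q \<in> Pt" for P Q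
  proof -
    have "P \<subseteq> X" "Q \<subseteq> X" using PQ partition_Union[OF part] by blast+
    then have "finite P" "finite Q" using assms(2) finite_subset by blast+
    then obtain x y where "((x \<in> P \<and> y \<in> R Q) \<or> (x \<in> Q \<and> y \<in> R P)) \<and> d x y = what d R P Q"
      using what_attained[of P Q R d] R[OF PQ(1)] R[OF PQ(2)] by blast
    then have "ok P Q (x, y)" unfolding ok_def by simp
    then show ?thesis ..
  qed
  \<comment> \<open>The recorded pair is a function of the unordered pair of parts, which is consistent because
    \<open>ok\<close> is symmetric.\<close>
  define rec where "rec e = (SOME z. \<exists>P\<in>Pt. \<exists>Q\<in>Pt. e = {P, Q} \<and> ok P Q z)" for e
  have "ok P Q (rec {P, Q})" if PQ: "P \<in> Pt" "Q \<in> Pt" for P Q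
  proof -
    have "\<exists>z. \<exists>P'\<in>Pt. \<exists>Q'\<in>Pt. {P, Q} = {P', Q'} \<and> ok P' Q' z"
      using ex_ok[OF PQ] PQ by blast
    then have "\<exists>P'\<in>Pt. \<exists>Q'\<in>Pt. {P, Q} = {P', Q'} \<and> ok P' Q' (rec {P, Q})"
      unfolding rec_def by (rule someI_ex[of "\<lambda>z. \<exists>P'\<in>Pt. \<exists>Q'\<in>Pt. {P, Q} = {P', Q'} \<and> ok P' Q' z"])
    then show ?thesis using ok_commute[of Q P "rec {P, Q}"] by (auto simp: doubleton_eq_iff)
  qed
  then have "\<forall>P\<in>Pt. \<forall>Q\<in>Pt. P \<noteq> Q \<longrightarrow> ok P Q (rec {P, Q})" by blast
  moreover obtain M where "is_mst Pt (sym2 (what d R)) M"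
    using ex_mst finite_partition[OF part assms(2)] partition_Union[OF part] assms(3) by blast
  ultimately show ?thesis unfolding multirep_output_def ok_def by blast
qed

lemma parts_meeting_pair:
  assumes "is_partition X Pt" "P \<in> Pt" "Q \<in> Pt" "x \<in> P" "y \<in> Q"
  shows "{P'\<in>Pt. P' \<inter> {x, y} \<noteq> {}} = {P, Q}"
  using assms partition_block_unique[OF assms(1)] by blast

lemma wt_forest_union_connecting_pairs:
  assumes forest: "initial_forest X Pt T" and "finite X" and "metric_on X d" and "finite M"
    and link: "\<And>e. e \<in> M \<Longrightarrow> \<exists>P Q x y. e = {P, Q} \<and> P \<in> Pt \<and> Q \<in> Pt \<and> P \<noteq> Q \<and>
      x \<in> P \<and> y \<in> Q \<and> g e = {x, y} \<and> d x y = h e"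
  shows "wt (sym2 d) (forest_edges Pt T \<union> g ` M) = wt (sym2 d) (forest_edges Pt T) + sum h M"
\<comment> \<open>Each pair joins two distinct parts, so it is not a forest edge, and the parts it meets recover e,
  so distinct e give distinct pairs.\<close>
proof -
  let ?E = "forest_edges Pt T"
  have part: "is_partition X Pt" using forest unfolding initial_forest_def by simp
  have crossing: "g e \<notin> ?E" and wt_g: "sym2 d (g e) = h e"
    and parts_g: "{P\<in>Pt. P \<inter> g e \<noteq> {}} = e" if eM: "e \<in> M" for e
  proof -
    obtain P Q x y where l: "e = {P, Q}" "P \<in> Pt" "Q \<in> Pt" "P \<noteq> Q" "x \<in> P" "y \<in> Q"
      "g e = {x, y}" "d x y = h e"
      using link[OF eM] by blast
    show "{P\<in>Pt. P \<inter> g e \<noteq> {}} = e"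
      using parts_meeting_pair[OF part l(2,3,5,6)] l(1,7) by simp
    have "\<not> g e \<subseteq> P'" if P': "P' \<in> Pt" for P'
    proof
      assume "g e \<subseteq> P'"
      then have "x \<in> P'" "y \<in> P'" using l(7) by auto
      then have "P' = P" "P' = Q"
        using partition_block_unique[OF part P'] l(2,3,5,6) by auto
      then show False using l(4) by simp
    qed
    then show "g e \<notin> ?E" using intra_forest_edges[OF forest] unfolding intra_def by blast
    have "x \<in> X" "y \<in> X" using l partition_Union[OF part] by blast+
    then have "d y x = d x y" using assms(3) unfolding metric_on_def by blast
    then show "sym2 d (g e) = h e" unfolding l(7) l(8)[symmetric] by (rule sym2_doubleton)
  qed
  have inj: "inj_on g M"
    by (rule inj_on_inverseI[of _ "\<lambda>s. {P\<in>Pt. P \<inter> s \<noteq> {}}"]) (rule parts_g)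
  have "?E \<inter> g ` M = {}" using crossing by blast
  moreover have "finite ?E"
    using finite_subset[OF forest_edges_subset_edges_on[OF forest] finite_edges_on[OF assms(2)]] .
  ultimately have "wt (sym2 d) (?E \<union> g ` M) = wt (sym2 d) ?E + wt (sym2 d) (g ` M)"
    unfolding wt_def using assms(4) by (simp add: sum.union_disjoint)
  also have "wt (sym2 d) (g ` M) = sum h M"
    unfolding wt_def sum.reindex[OF inj] using wt_g by simp
  finally show ?thesis .
qed

lemma wt_multirep_output:
  assumes forest: "initial_forest X Pt T" and "finite X" and "metric_on X d"
    and R: "\<And>P. P \<in> Pt \<Longrightarrow> R P \<subseteq> P"
    and "multirep_output X d Pt T R F"
  shows "\<exists>M. is_mst Pt (sym2 (what d R)) M \<and>
    wt (sym2 d) F = wt (sym2 d) (forest_edges Pt T) + wt (sym2 (what d R)) M"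
proof -
  obtain rec M where rec: "\<forall>P\<in>Pt. \<forall>Q\<in>Pt. P \<noteq> Q \<longrightarrow>
           ((fst (rec {P, Q}) \<in> P \<and> snd (rec {P, Q}) \<in> R Q) \<or>
            (fst (rec {P, Q}) \<in> Q \<and> snd (rec {P, Q}) \<in> R P)) \<and>
           d (fst (rec {P, Q})) (snd (rec {P, Q})) = what d R P Q"
    and mst: "is_mst Pt (sym2 (what d R)) M"
    and F: "F = forest_edges Pt T \<union> {{fst (rec e), snd (rec e)} | e. e \<in> M}"
    using assms(5) unfolding multirep_output_def by (elim exE conjE)
  define g where "g e = {fst (rec e), snd (rec e)}" for e
  have "\<exists>P Q x y. e = {P, Q} \<and> P \<in> Pt \<and> Q \<in> Pt \<and> P \<noteq> Q \<and> x \<in> P \<and> y \<in> Q \<and>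
      g e = {x, y} \<and> d x y = sym2 (what d R) e" if eM: "e \<in> M" for e
  proof -
    obtain P Q where e: "e = {P, Q}" "P \<in> Pt" "Q \<in> Pt" "P \<noteq> Q"
      using eM mst unfolding is_mst_def spanning_tree_def edges_on_def by blast
    have w: "sym2 (what d R) e = what d R P Q"
      unfolding e(1) by (rule sym2_doubleton[of "what d R", OF what_commute])
    have "(fst (rec e) \<in> P \<and> snd (rec e) \<in> Q) \<or> (fst (rec e) \<in> Q \<and> snd (rec e) \<in> P)"
      "d (fst (rec e)) (snd (rec e)) = what d R P Q"
      using rec e(2-4) R[OF e(2)] R[OF e(3)] unfolding e(1) by blast+
    then show ?thesis
      using e w what_commute[of d R P Q] unfolding g_def by (metis insert_commute)
  qed
  moreover have "finite M"
    using mst unfolding is_mst_def by (rule spanning_tree_finite[OF conjunct1])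
  moreover have "F = forest_edges Pt T \<union> g ` M" unfolding F g_def by blast
  ultimately show ?thesis
    using wt_forest_union_connecting_pairs[OF forest assms(2,3)] mst unfolding wt_def by blast
qed

section \<open>Two-valued metrics from colourings\<close>

definition colour_dist :: "real \<Rightarrow> ('a \<Rightarrow> 'b) \<Rightarrow> 'a \<Rightarrow> 'a \<Rightarrow> real" where
  "colour_dist \<epsilon> c x y = (if x = y then 0 else if c x = c y then \<epsilon> else 1)"

lemma colour_dist_commute: "colour_dist \<epsilon> c x y = colour_dist \<epsilon> c y x"
  unfolding colour_dist_def by auto

lemma metric_on_colour_dist:
  assumes "0 < \<epsilon>" "\<epsilon> \<le> 1"
  shows "metric_on X (colour_dist \<epsilon> c)"
  using assms unfolding metric_on_def colour_dist_def by auto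

lemma sym2_colour_dist: "sym2 (colour_dist \<epsilon> c) {x, y} = colour_dist \<epsilon> c x y"
  by (rule sym2_doubleton[of "colour_dist \<epsilon> c", OF colour_dist_commute])

lemma sym2_colour_dist_ge:
  assumes "\<epsilon> \<le> 1" "e \<in> edges_on X"
  shows "\<epsilon> \<le> sym2 (colour_dist \<epsilon> c) e"
  using assms unfolding edges_on_def by (auto simp: sym2_colour_dist colour_dist_def)

lemma setdist_colour_dist:
  assumes "A \<noteq> {}" "B \<noteq> {}" "c ` A \<inter> c ` B = {}"
  shows "setdist (colour_dist \<epsilon> c) A B = 1"
proof -
  have "{colour_dist \<epsilon> c a b | a b. a \<in> A \<and> b \<in> B} = {1}"
    using assms unfolding colour_dist_def by fastforce
  then show ?thesis unfolding setdist_def by simp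
qed

definition colour_classes :: "('a \<Rightarrow> 'b) \<Rightarrow> 'a set \<Rightarrow> 'a set set" where
  "colour_classes c X = (\<lambda>k. {x\<in>X. c x = k}) ` c ` X"

lemma is_partition_colour_classes: "is_partition X (colour_classes c X)"
  unfolding is_partition_def colour_classes_def by auto

lemma card_colour_classes: "card (colour_classes c X) = card (c ` X)"
  unfolding colour_classes_def by (rule card_image) (auto simp: inj_on_def)

lemma doubleton_in_colour_class_iff:
  "x \<in> X \<Longrightarrow> y \<in> X \<Longrightarrow> (\<exists>K\<in>colour_classes c X. {x, y} \<subseteq> K) \<longleftrightarrow> c x = c y"
  unfolding colour_classes_def by auto

lemma wt_colour_dist_spanning_tree_ge:
  assumes tree: "spanning_tree X S" and "\<epsilon> \<le> 1"
  shows "\<epsilon> * (real (card X) - 1) + (1 - \<epsilon>) * (real (card (c ` X)) - 1)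
    \<le> wt (sym2 (colour_dist \<epsilon> c)) S"
\<comment> \<open>Every edge costs \<epsilon>, plus 1 - \<epsilon> if it joins two colour classes, and a spanning tree has at least
  as many such edges as there are colour classes minus one.\<close>
proof -
  let ?C = "S - intra (colour_classes c X) S"
  have "card (c ` X) \<le> card ?C + 1"
    using card_partition_le_crossing_edges[OF tree is_partition_colour_classes]
    by (simp add: card_colour_classes)
  then have cut: "(1 - \<epsilon>) * (real (card (c ` X)) - 1) \<le> (1 - \<epsilon>) * real (card ?C)"
    using assms(2) by (intro mult_left_mono) auto
  have "sym2 (colour_dist \<epsilon> c) e = \<epsilon> + (1 - \<epsilon>) * (if e \<in> ?C then 1 else 0)" if eS: "e \<in> S" for e
  proof -
    obtain x y where "e = {x, y}" "x \<in> X" "y \<in> X" "x \<noteq> y"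
      using eS tree unfolding spanning_tree_def edges_on_def by blast
    then show ?thesis
      using eS doubleton_in_colour_class_iff[of x X y c]
      by (auto simp: sym2_colour_dist colour_dist_def intra_def)
  qed
  then have "wt (sym2 (colour_dist \<epsilon> c)) S = (\<Sum>e\<in>S. \<epsilon> + (1 - \<epsilon>) * (if e \<in> ?C then 1 else 0))"
    unfolding wt_def by (rule sum.cong[OF refl])
  also have "\<dots> = \<epsilon> * real (card S) + (1 - \<epsilon>) * real (card ?C)"
    using spanning_tree_finite[OF tree]
    by (simp add: sum.distrib sum_distrib_left[symmetric] sum.If_cases Int_absorb1 mult.commute
        Collect_neg_eq Diff_eq)
  also have "real (card S) = real (card X) - 1"
  proof -
    have "card X > 0" "card S = card X - 1"
      using tree unfolding spanning_tree_def by (auto simp: card_gt_0_iff)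
    then show ?thesis by (simp add: of_nat_diff)
  qed
  finally show ?thesis using cut by simp
qed

section \<open>The tight instance\<close>

locale tight_instance =
  fixes l p :: nat and \<epsilon> :: real
  assumes p_pos: "0 < p" and l_pos: "0 < l" and \<epsilon>_pos: "0 < \<epsilon>" and \<epsilon>_less_1: "\<epsilon> < 1"
begin

definition q :: nat where "q = Suc l"

definition part :: "nat \<Rightarrow> nat set" where "part i = {i * q..<i * q + q}"

definition X :: "nat set" where "X = {..<p * q}"

definition parts :: "nat set set" where "parts = part ` {..<p}"

definition colour :: "nat \<Rightarrow> nat" where
  "colour x = (if x mod q = 0 then 0 else Suc (x div q))"

definition d :: "nat \<Rightarrow> nat \<Rightarrow> real" where "d = colour_dist \<epsilon> colour"

definition tree :: "nat set \<Rightarrow> nat set set" where "tree P = star (Suc (Min P)) P"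

definition reps :: "nat set \<Rightarrow> nat set" where "reps P = P - {Min P}"

definition hubs :: "nat set" where "hubs = (\<lambda>i. i * q) ` {..<p}"

lemma q_pos: "0 < q" unfolding q_def by simp

lemma mem_part_iff: "x \<in> part i \<longleftrightarrow> x div q = i"
  using q_pos unfolding part_def
  by (metis atLeastLessThan_iff add.commute div_nat_eqI div_times_less_eq_dividend
      dividend_less_div_times mult.commute mult_Suc_right)

lemma finite_part: "finite (part i)" unfolding part_def by simp

lemma card_part: "card (part i) = q" unfolding part_def by simp

lemma hub_in_part: "i * q \<in> part i" unfolding part_def using q_pos by simp

lemma centre_in_part: "Suc (i * q) \<in> part i" unfolding part_def q_def using l_pos by simp

lemma Min_part: "Min (part i) = i * q"
  unfolding part_def using q_pos by (intro Min_eqI) auto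

lemma colour_part:
  assumes "x \<in> part i"
  shows "colour x = (if x = i * q then 0 else Suc i)"
proof -
  have "x div q = i" using assms mem_part_iff by simp
  moreover have "x = i * q + x mod q" using calculation div_mult_mod_eq[of x q] by simp
  ultimately have "x mod q = 0 \<longleftrightarrow> x = i * q" by linarith
  then show ?thesis unfolding colour_def using \<open>x div q = i\<close> by simp
qed

lemma part_subset_X: "i < p \<Longrightarrow> part i \<subseteq> X"
  unfolding X_def using mem_part_iff
  by (metis div_less_iff_less_mult lessThan_iff mult.commute q_pos subsetI)

lemma is_partition_parts: "is_partition X parts"
  unfolding is_partition_def parts_def
proof (intro conjI ballI impI)
  show "\<Union> (part ` {..<p}) = X"
    using part_subset_X mem_part_iff q_pos unfolding X_def
    by (auto simp: div_less_iff_less_mult mult.commute)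
qed (use hub_in_part in \<open>blast\<close>, auto simp: mem_part_iff)

lemma parts_cases: "P \<in> parts \<Longrightarrow> (\<And>i. i < p \<Longrightarrow> P = part i \<Longrightarrow> thesis) \<Longrightarrow> thesis"
  unfolding parts_def by blast

lemma card_parts: "card parts = p"
proof -
  have "inj_on part {..<p}"
    by (rule inj_onI) (metis hub_in_part mem_part_iff)
  then show ?thesis unfolding parts_def by (simp add: card_image)
qed

lemma finite_X: "finite X" unfolding X_def by simp

lemma X_nonempty: "X \<noteq> {}"
  unfolding X_def using p_pos q_pos by (metis lessThan_iff empty_iff nat_0_less_mult_iff)

lemma metric_on_d: "metric_on X d"
  unfolding d_def using \<epsilon>_pos \<epsilon>_less_1 by (intro metric_on_colour_dist) auto

lemma tree_part: "tree (part i) = star (Suc (i * q)) (part i)"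
  unfolding tree_def Min_part ..

lemma initial_forest_parts: "initial_forest X parts tree"
  unfolding initial_forest_def
  using is_partition_parts spanning_tree_star[OF finite_part centre_in_part]
  by (auto simp: tree_part elim: parts_cases)

lemma reps_part: "reps (part i) = part i - {i * q}"
  unfolding reps_def Min_part ..

lemma reps_subset: "P \<in> parts \<Longrightarrow> reps P \<subseteq> P"
  unfolding reps_def by blast

lemma card_reps: "P \<in> parts \<Longrightarrow> card (reps P) = l"
proof (elim parts_cases)
  fix i assume "P = part i"
  then have "card (reps P) = card (part i) - 1"
    by (simp add: reps_part card_Diff_singleton finite_part hub_in_part)
  then show ?thesis by (simp add: card_part q_def)
qed

lemma reps_nonempty: "P \<in> parts \<Longrightarrow> reps P \<noteq> {}"
  using card_reps l_pos by fastforce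

lemma wt_tree: "P \<in> parts \<Longrightarrow> wt (sym2 d) (tree P) = 1 + (real l - 1) * \<epsilon>"
proof (elim parts_cases)
  fix i assume P: "P = part i"
  let ?c = "Suc (i * q)"
  have "wt (sym2 d) (tree P) = (\<Sum>x\<in>part i - {?c}. d ?c x)"
    unfolding P tree_part d_def by (rule wt_star[OF colour_dist_commute])
  also have "\<dots> = (\<Sum>x\<in>part i - {?c}. if x = i * q then 1 else \<epsilon>)"
    using colour_part[of ?c i] colour_part[of _ i] centre_in_part
    by (intro sum.cong) (auto simp: d_def colour_dist_def)
  also have "\<dots> = 1 + (\<Sum>x\<in>part i - {?c, i * q}. \<epsilon>)"
  proof -
    have "part i - {?c} = insert (i * q) (part i - {?c, i * q})" using hub_in_part by auto
    then show ?thesis using finite_part by (simp add: sum.insert)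
  qed
  also have "\<dots> = 1 + (real l - 1) * \<epsilon>"
  proof -
    have "card (part i - {?c, i * q}) = l - 1"
      using card_part hub_in_part centre_in_part finite_part unfolding q_def
      by (simp add: card_Diff_subset)
    then show ?thesis using l_pos by (simp add: of_nat_diff)
  qed
  finally show ?thesis .
qed

lemma wt_forest: "wt (sym2 d) (forest_edges parts tree) = real p * (1 + (real l - 1) * \<epsilon>)"
  using wt_forest_edges[OF initial_forest_parts finite_X] wt_tree card_parts by simp

lemma part_inter_hubs: "i < p \<Longrightarrow> part i \<inter> hubs = {i * q}"
  unfolding hubs_def using hub_in_part mem_part_iff q_pos by auto

lemma transversal_hubs: "transversal parts hubs"
  unfolding transversal_def using part_inter_hubs hub_in_part
  by (auto simp: parts_def hubs_def)

lemma hubs_subset_X: "hubs \<subseteq> X"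
  using transversal_hubs partition_Union[OF is_partition_parts] unfolding transversal_def by simp

lemma zero_in_hubs: "0 \<in> hubs"
  unfolding hubs_def using p_pos by force

lemma card_hubs: "card hubs = p"
  using card_transversal[OF transversal_hubs is_partition_parts finite_X] card_parts by simp

lemma spanning_tree_hubs: "spanning_tree hubs (star 0 hubs)"
  using finite_subset[OF hubs_subset_X finite_X] zero_in_hubs by (rule spanning_tree_star)

lemma wt_star_hubs: "wt (sym2 d) (star 0 hubs) = (real p - 1) * \<epsilon>"
proof -
  have "colour h = 0" if "h \<in> hubs" for h
    using that unfolding hubs_def colour_def by auto
  then have "wt (sym2 d) (star 0 hubs) = (\<Sum>h\<in>hubs - {0}. \<epsilon>)"
    unfolding d_def wt_star[OF colour_dist_commute] using zero_in_hubs
    by (intro sum.cong) (auto simp: colour_dist_def)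
  also have "\<dots> = (real p - 1) * \<epsilon>"
    using card_hubs zero_in_hubs finite_subset[OF hubs_subset_X finite_X] p_pos
    by (simp add: of_nat_diff)
  finally show ?thesis .
qed

definition opt_tree :: "nat set set" where
  "opt_tree = forest_edges parts tree \<union> star 0 hubs"

lemma spanning_tree_opt_tree: "spanning_tree X opt_tree"
  unfolding opt_tree_def
  using initial_forest_parts finite_X transversal_hubs spanning_tree_hubs
  by (rule spanning_tree_forest_union)

lemma wt_opt_tree: "wt (sym2 d) opt_tree = real p + \<epsilon> * (real p * real l - 1)"
  using wt_forest_union_transversal_tree[OF initial_forest_parts finite_X transversal_hubs
      spanning_tree_hubs]
  unfolding opt_tree_def by (simp add: wt_forest wt_star_hubs algebra_simps)

lemma colour_image: "colour ` X = {..p}"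
proof
  show "colour ` X \<subseteq> {..p}"
    unfolding X_def colour_def using q_pos
    by (auto simp: div_less_iff_less_mult mult.commute Suc_le_eq)
  show "{..p} \<subseteq> colour ` X"
  proof
    fix k assume k: "k \<in> {..p}"
    show "k \<in> colour ` X"
    proof (cases k)
      case 0
      then have "k = colour 0" unfolding colour_def by simp
      then show ?thesis using zero_in_hubs hubs_subset_X by blast
    next
      case (Suc i)
      then have "i < p" using k by simp
      then have "k = colour (Suc (i * q))" "Suc (i * q) \<in> X"
        using Suc colour_part[OF centre_in_part] part_subset_X centre_in_part by auto
      then show ?thesis by (rule image_eqI)
    qed
  qed
qed

lemma wt_opt_tree_le:
  assumes "spanning_tree X S"
  shows "wt (sym2 d) opt_tree \<le> wt (sym2 d) S"
proof -
  have "\<epsilon> * (real (card X) - 1) + (1 - \<epsilon>) * (real (card (colour ` X)) - 1) \<le> wt (sym2 d) S"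
    unfolding d_def using assms \<epsilon>_less_1 by (intro wt_colour_dist_spanning_tree_ge) auto
  moreover have "card X = p * Suc l" "card (colour ` X) = Suc p"
    unfolding colour_image by (simp_all add: X_def q_def)
  ultimately show ?thesis unfolding wt_opt_tree by (simp add: algebra_simps)
qed

lemma is_mst_opt_tree: "is_mst X (sym2 d) opt_tree"
  unfolding is_mst_def using spanning_tree_opt_tree wt_opt_tree_le by blast

lemma forest_subset_opt_tree: "forest_edges parts tree \<subseteq> opt_tree"
  unfolding opt_tree_def by blast

lemma intra_opt_tree: "intra parts opt_tree = forest_edges parts tree"
  using intra_forest_edges[OF initial_forest_parts]
    intra_transversal_tree[OF transversal_hubs spanning_tree_hubs]
  unfolding opt_tree_def intra_def by blast

lemma wt_intra_mst_le:
  assumes mst: "is_mst X (sym2 d) S"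
  shows "wt (sym2 d) (intra parts S) \<le> wt (sym2 d) (forest_edges parts tree)"
proof -
  have tree: "spanning_tree X S" using mst unfolding is_mst_def by simp
  have "\<epsilon> * (real (card parts) - 1) \<le> wt (sym2 d) (S - intra parts S)"
    using tree \<epsilon>_pos \<epsilon>_less_1 unfolding d_def spanning_tree_def
    by (intro wt_crossing_edges_ge[OF tree is_partition_parts] sym2_colour_dist_ge) auto
  moreover have "wt (sym2 d) S = wt (sym2 d) (S - intra parts S) + wt (sym2 d) (intra parts S)"
    unfolding wt_def using spanning_tree_finite[OF tree]
    by (intro sum.subset_diff) (auto simp: intra_def)
  moreover have "wt (sym2 d) S = wt (sym2 d) opt_tree"
    using is_mst_wt_eq[OF mst is_mst_opt_tree] .
  ultimately show ?thesis
    unfolding wt_opt_tree wt_forest card_parts by (simp add: algebra_simps)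
qed

lemma gamma_eq_1: "gamma X d parts tree = 1"
proof -
  let ?W = "{wt (sym2 d) (intra parts S) | S. is_mst X (sym2 d) S}"
  have "?W \<subseteq> (\<lambda>S. wt (sym2 d) (intra parts S)) ` Pow (edges_on X)"
    unfolding is_mst_def spanning_tree_def by blast
  then have "finite ?W" by (rule finite_subset) (simp add: finite_edges_on[OF finite_X])
  moreover have "wt (sym2 d) (forest_edges parts tree) \<in> ?W"
    using is_mst_opt_tree intra_opt_tree by (metis (mono_tags, lifting) mem_Collect_eq)
  ultimately have "Max ?W = wt (sym2 d) (forest_edges parts tree)"
    using wt_intra_mst_le by (intro Max_eqI) auto
  moreover have "wt (sym2 d) (forest_edges parts tree) > 0"
  proof -
    have "0 \<le> (real l - 1) * \<epsilon>" using l_pos \<epsilon>_pos by simp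
    then show ?thesis unfolding wt_forest using p_pos by (simp add: add_pos_nonneg)
  qed
  ultimately show ?thesis unfolding gamma_def by simp
qed

lemma what_parts:
  assumes "P \<in> parts" "Q \<in> parts" "P \<noteq> Q"
  shows "what d reps P Q = 1"
proof -
  obtain i j where ij: "i < p" "j < p" "P = part i" "Q = part j"
    using assms(1,2) by (elim parts_cases)
  then have "i \<noteq> j" using assms(3) by blast
  have colours: "colour ` part k \<subseteq> {0, Suc k}" "colour ` reps (part k) \<subseteq> {Suc k}" for k
    using colour_part[of _ k] by (auto simp: reps_part)
  have "{0, Suc i} \<inter> {Suc j} = {}" "{0, Suc j} \<inter> {Suc i} = {}" using \<open>i \<noteq> j\<close> by auto
  then have "colour ` P \<inter> colour ` reps Q = {}" "colour ` Q \<inter> colour ` reps P = {}"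
    unfolding ij using colours[of i] colours[of j] by (metis Int_mono subset_empty)+
  moreover have "P \<noteq> {}" "Q \<noteq> {}" "reps P \<noteq> {}" "reps Q \<noteq> {}"
    using reps_nonempty reps_subset assms by blast+
  ultimately have "setdist d P (reps Q) = 1" "setdist d Q (reps P) = 1"
    unfolding d_def by (simp_all add: setdist_colour_dist)
  then show ?thesis unfolding what_def by simp
qed

lemma wt_contracted_spanning_tree:
  assumes "spanning_tree parts M"
  shows "wt (sym2 (what d reps)) M = real p - 1"
proof -
  have "sym2 (what d reps) e = 1" if eM: "e \<in> M" for e
  proof -
    obtain P Q where "e = {P, Q}" "P \<in> parts" "Q \<in> parts" "P \<noteq> Q"
      using eM assms unfolding spanning_tree_def edges_on_def by blast
    then show ?thesis using sym2_doubleton[of "what d reps", OF what_commute] what_parts by simp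
  qed
  then have "wt (sym2 (what d reps)) M = real (card M)" unfolding wt_def by simp
  then show ?thesis
    using assms p_pos card_parts unfolding spanning_tree_def by (simp add: of_nat_diff)
qed

lemma wt_multirep_output_parts:
  assumes "multirep_output X d parts tree reps F"
  shows "wt (sym2 d) F = real p * (1 + (real l - 1) * \<epsilon>) + (real p - 1)"
proof -
  obtain M where "is_mst parts (sym2 (what d reps)) M"
    "wt (sym2 d) F = wt (sym2 d) (forest_edges parts tree) + wt (sym2 (what d reps)) M"
    using wt_multirep_output[OF initial_forest_parts finite_X metric_on_d reps_subset assms]
    by blast
  then show ?thesis
    using wt_contracted_spanning_tree wt_forest unfolding is_mst_def by simp
qed


lemma is_mst_if_mfc_opt: "mfc_opt X d parts tree S \<Longrightarrow> is_mst X (sym2 d) S"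
  by (rule mst_if_mfc_opt[OF is_mst_opt_tree forest_subset_opt_tree])

lemma ex_multirep_output_parts: "\<exists>F. multirep_output X d parts tree reps F"
  using reps_subset reps_nonempty
  by (intro ex_multirep_output[OF initial_forest_parts finite_X X_nonempty]) blast

lemma wt_multirep_output_ratio:
  assumes "multirep_output X d parts tree reps F" "mfc_opt X d parts tree S"
  shows "wt (sym2 d) F =
    ((2 + real l * \<epsilon> - \<epsilon>) * real p - 1) / ((1 + \<epsilon> * real l) * real p - \<epsilon>) * wt (sym2 d) S"
proof -
  have num: "wt (sym2 d) F = (2 + real l * \<epsilon> - \<epsilon>) * real p - 1"
    using wt_multirep_output_parts[OF assms(1)] by (simp add: algebra_simps)
  have den: "wt (sym2 d) S = (1 + \<epsilon> * real l) * real p - \<epsilon>"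
    using is_mst_wt_eq[OF is_mst_if_mfc_opt[OF assms(2)] is_mst_opt_tree] wt_opt_tree
    by (simp add: algebra_simps)
  have "\<epsilon> < real p" using p_pos \<epsilon>_less_1 by linarith
  moreover have "0 \<le> \<epsilon> * real l * real p" using \<epsilon>_pos by simp
  ultimately have "(1 + \<epsilon> * real l) * real p - \<epsilon> \<noteq> 0" by (simp add: algebra_simps)
  then show ?thesis unfolding num den by simp
qed

end

theorem theorem2:
  fixes p l :: nat and \<epsilon> :: real
  assumes "p > 0" and "l > 0" and "0 < \<epsilon>" and "\<epsilon> < 1"
  shows "\<exists>(X :: nat set) d Pt T R.
    finite X \<and> X \<noteq> {} \<and> metric_on X d \<and>
    initial_forest X Pt T \<and> gamma X d Pt T = 1 \<and>
    (\<forall>P\<in>Pt. R P \<subseteq> P \<and> card (R P) = l) \<and>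
    (\<exists>S. mfc_opt X d Pt T S) \<and>
    (\<forall>S. mfc_opt X d Pt T S \<longrightarrow> is_mst X (sym2 d) S) \<and>
    (\<exists>F. multirep_output X d Pt T R F) \<and>
    (\<forall>F S. multirep_output X d Pt T R F \<and> mfc_opt X d Pt T S \<longrightarrow>
       wt (sym2 d) F =
         ((2 + real l * \<epsilon> - \<epsilon>) * real p - 1) / ((1 + \<epsilon> * real l) * real p - \<epsilon>)
         * wt (sym2 d) S)"
proof -
  interpret tight_instance l p \<epsilon> using assms by unfold_locales
  show ?thesis
  proof (rule exI[of _ X], rule exI[of _ d], rule exI[of _ parts], rule exI[of _ tree],
      rule exI[of _ reps])
  qed (use finite_X X_nonempty metric_on_d initial_forest_parts gamma_eq_1 reps_subset card_reps
      mfc_opt_if_mst[OF is_mst_opt_tree forest_subset_opt_tree] is_mst_if_mfc_opt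
      ex_multirep_output_parts wt_multirep_output_ratio in blast)
qed

end
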